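(* Let $d\ge2$, $\xi>0$, let $\sigma:\xi\mathbb{Z}^d\to\mathbb{R}$ be a generalized mass configuration, let $R>0$ be such that $\operatorname{supp}\sigma\subset\hat B_R:=B(0,R)\cap\xi\mathbb{Z}^d$, and let $x_1,x_2,\ldots$ be an infinitely covering sequence of $\hat B_R$. Let $\sigma_k:=T_{x_k}\cdots T_{x_1}\sigma$ and let $u_k$ be the $k$th odometer function, and let $\nu(x):=\lim_{k\to\infty}\sigma_k(x)$ and $u(x):=\lim_{k\to\infty}u_k(x)$ (these limits exist for every $x$). Then $\nu=\sigma+\Delta u$ and $u=U^\sigma-v$, where $$v(x):=\sup\{f(x): f:\xi\mathbb{Z}^d\to\mathbb{R},\ \Delta f\ge0 \text{ in }\hat B_R,\ f\le U^\sigma\text{ in }\xi\mathbb{Z}^d\}.$$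
   Context: A generalized mass configuration on $\xi\mathbb{Z}^d$ is a bounded function with finite support; $\eta_+=\max(\eta,0)$. For $y,y'\in\xi\mathbb{Z}^d$, $y'\sim y$ means $y'$ is one of the $2d$ lattice neighbours of $y$. The discrete Laplacian is $\Delta f(y)=\frac{1}{2d\xi^2}\sum_{y'\sim y}(f(y')-f(y))$. Toppling at $x$: $T_x\eta(y):=\eta(y)+\eta_+(x)\xi^2\Delta\delta_x(y)$ ($\delta_x$ the discrete delta at $x$). An infinitely covering sequence of $\hat B_R$ is a sequence of points of $\hat B_R$ in which every point of $\hat B_R$ appears infinitely often. The $k$th odometer function is $u_k(x):=\xi^2\sum_{1\le j\le k,\ x_j=x}(\sigma_{j-1})_+(x)$ with $\sigma_0=\sigma$. The discrete potential of a finitely supported $\mu:\xi\mathbb{Z}^d\to\mathbb{R}$ is $U^\mu(x):=\xi^d\sum_{y\in\xi\mathbb{Z}^d}g_\xi(x,y)\mu(y)$, where $g_\xi(x,y)=\frac{2}{\pi}\log\xi-\gamma_0(x/\xi,y/\xi)$ if $d=2$ and $g_\xi(x,y)=\xi^{2-d}\gamma_1(x/\xi,y/\xi)$ if $d\ge3$; here $\gamma_0(x,y)=\lim_{n\to\infty}(\mathbb{E}_x|\{k\le n:X_k=x\}|-\mathbb{E}_x|\{k\le n:X_k=y\}|)$ is the potential kernel of simple random walk $(X_k)$ on $\mathbb{Z}^2$ and $\gamma_1(x,y)=\mathbb{E}_x|\{k:X_k=y\}|$ is the Green's function of simple random walk on $\mathbb{Z}^d$, $d\ge3$. In particular $-\Delta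 U^\mu=\mu$. *)

theory Defs
  imports "HOL-Analysis.Analysis"
begin

text \<open>Lattice points of xi Z^d are represented by their integer coordinate vectors
  z :: int^'d (the actual point is xi * z). The dimension is d = CARD('d).\<close>

definition lat_nbrs :: "int^'d \<Rightarrow> (int^'d) set" where
  "lat_nbrs z = {z + axis i 1 | i. True} \<union> {z - axis i 1 | i. True}"

definition lat_point :: "real \<Rightarrow> int^'d \<Rightarrow> real^'d" where
  "lat_point \<xi> z = (\<chi> i. \<xi> * real_of_int (z $ i))"

definition lat_ball :: "real \<Rightarrow> real \<Rightarrow> (int^'d) set" where
  "lat_ball \<xi> R = {z. norm (lat_point \<xi> z) < R}"

definition disc_lap :: "real \<Rightarrow> (int^'d \<Rightarrow> real) \<Rightarrow> int^'d \<Rightarrow> real" where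
  "disc_lap \<xi> f z = (\<Sum>z'\<in>lat_nbrs z. f z' - f z) / (2 * real CARD('d) * \<xi>\<^sup>2)"

definition pos_part :: "real \<Rightarrow> real" where
  "pos_part t = max t 0"

definition ddelta :: "int^'d \<Rightarrow> int^'d \<Rightarrow> real" where
  "ddelta x y = (if y = x then 1 else 0)"

definition topple :: "real \<Rightarrow> int^'d \<Rightarrow> (int^'d \<Rightarrow> real) \<Rightarrow> int^'d \<Rightarrow> real" where
  "topple \<xi> x \<eta> y = \<eta> y + pos_part (\<eta> x) * \<xi>\<^sup>2 * disc_lap \<xi> (ddelta x) y"

text \<open>sigma_k = T_{x_k} ... T_{x_1} sigma (the sequence xs is indexed from 1).\<close>
fun topple_seq :: "real \<Rightarrow> (nat \<Rightarrow> int^'d) \<Rightarrow> (int^'d \<Rightarrow> real) \<Rightarrow> nat \<Rightarrow> int^'d \<Rightarrow> real" where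
  "topple_seq \<xi> xs \<sigma> 0 = \<sigma>"
| "topple_seq \<xi> xs \<sigma> (Suc k) = topple \<xi> (xs (Suc k)) (topple_seq \<xi> xs \<sigma> k)"

definition odometer :: "real \<Rightarrow> (nat \<Rightarrow> int^'d) \<Rightarrow> (int^'d \<Rightarrow> real) \<Rightarrow> nat \<Rightarrow> int^'d \<Rightarrow> real" where
  "odometer \<xi> xs \<sigma> k x =
     \<xi>\<^sup>2 * (\<Sum>j\<in>{j. 1 \<le> j \<and> j \<le> k \<and> xs j = x}. pos_part (topple_seq \<xi> xs \<sigma> (j - 1) x))"

definition infinitely_covering :: "(int^'d) set \<Rightarrow> (nat \<Rightarrow> int^'d) \<Rightarrow> bool" where
  "infinitely_covering B xs \<longleftrightarrow> (\<forall>k\<ge>1. xs k \<in> B) \<and> (\<forall>z\<in>B. infinite {k. k \<ge> 1 \<and> xs k = z})"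

text \<open>k-step transition probability of simple random walk on Z^d:
  srw_p k x y = P_x(X_k = y).\<close>
fun srw_p :: "nat \<Rightarrow> int^'d \<Rightarrow> int^'d \<Rightarrow> real" where
  "srw_p 0 x y = (if x = y then 1 else 0)"
| "srw_p (Suc k) x y = (\<Sum>z\<in>lat_nbrs x. srw_p k z y) / (2 * real CARD('d))"

definition exp_visits :: "nat \<Rightarrow> int^'d \<Rightarrow> int^'d \<Rightarrow> real" where
  "exp_visits n x y = (\<Sum>k\<le>n. srw_p k x y)"

definition pot_kernel :: "int^'d \<Rightarrow> int^'d \<Rightarrow> real" where
  "pot_kernel x y = lim (\<lambda>n. exp_visits n x x - exp_visits n x y)"

definition green_fn :: "int^'d \<Rightarrow> int^'d \<Rightarrow> real" where
  "green_fn x y = (\<Sum>k. srw_p k x y)"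

definition g_xi :: "real \<Rightarrow> int^'d \<Rightarrow> int^'d \<Rightarrow> real" where
  "g_xi \<xi> x y = (if CARD('d) = 2 then 2 / pi * ln \<xi> - pot_kernel x y
                  else \<xi> powr (2 - real CARD('d)) * green_fn x y)"

definition disc_potential :: "real \<Rightarrow> (int^'d \<Rightarrow> real) \<Rightarrow> int^'d \<Rightarrow> real" where
  "disc_potential \<xi> \<mu> x = \<xi> ^ CARD('d) * (\<Sum>y\<in>{y. \<mu> y \<noteq> 0}. g_xi \<xi> x y * \<mu> y)"

definition majorant_v :: "real \<Rightarrow> real \<Rightarrow> (int^'d \<Rightarrow> real) \<Rightarrow> int^'d \<Rightarrow> real" where
  "majorant_v \<xi> R \<sigma> x = Sup {f x | f. (\<forall>z\<in>lat_ball \<xi> R. disc_lap \<xi> f z \<ge> 0)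
                                      \<and> (\<forall>z. f z \<le> disc_potential \<xi> \<sigma> z)}"

end

theory Submission
  imports Defs
begin

text \<open>
  The odometers \<open>u\<^sub>k\<close> increase, and they stay bounded: toppling preserves the total mass on a
  neighbourhood of \<open>B\<^sub>R\<close> and raises the second moment \<open>\<Sum> |y|\<^sup>2 \<sigma>\<^sub>k(y)\<close> by exactly the mass
  toppled, while \<open>\<sigma>\<^sub>k\<close> stays bounded below. Hence \<open>u\<^sub>k \<rightarrow> u\<close> and \<open>\<sigma>\<^sub>k = \<sigma> + \<Delta>u\<^sub>k \<rightarrow> \<nu> = \<sigma> + \<Delta>u\<close>.
  Every site of \<open>B\<^sub>R\<close> is toppled infinitely often, so \<open>\<nu> \<le> 0\<close> there, and a site that has
  toppled once keeps nonnegative mass, so \<open>\<nu> = 0\<close> where \<open>u > 0\<close>.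

  Since \<open>\<Delta>U\<^sup>\<sigma> = -\<sigma>\<close>, the function \<open>w = U\<^sup>\<sigma> - u\<close> has \<open>\<Delta>w = -\<nu> \<ge> 0\<close> on \<open>B\<^sub>R\<close> and \<open>w \<le> U\<^sup>\<sigma>\<close>, so
  \<open>w \<le> v\<close>; conversely, for every competitor \<open>f\<close> the difference \<open>f - w\<close> is subharmonic on the
  finite set \<open>{u > 0}\<close> and nonpositive off it, so \<open>f \<le> w\<close> by the maximum principle.

  The identity \<open>\<Delta>g\<^sub>\<xi>(\<cdot>, y) = -\<delta>\<^sub>y / \<xi>\<^sup>d\<close> behind \<open>\<Delta>U\<^sup>\<sigma> = -\<sigma>\<close> comes from the Fourier
  representation \<open>(2\<pi>)\<^sup>d p\<^sub>n(x, y) = \<integral> \<phi>(\<theta>)\<^sup>n cos (\<theta>\<cdot>(y - x)) d\<theta>\<close> over \<open>[-\<pi>, \<pi>]\<^sup>d\<close>, with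
  \<open>\<phi>(\<theta>) = (1/d) \<Sum>\<^sub>i cos \<theta>\<^sub>i\<close>: it gives \<open>p\<^sub>n \<rightarrow> 0\<close>, the existence of the potential kernel, and
  summability of \<open>p\<^sub>n\<close> for \<open>d \<ge> 3\<close>, using \<open>1 - \<phi>(\<theta>) \<ge> |\<theta>|\<^sup>2 / (12 d)\<close>.
\<close>

section \<open>Lattice neighbours and the discrete Laplacian\<close>

lemma lat_nbrs_eq: "lat_nbrs x = range (\<lambda>i. x + axis i 1) \<union> range (\<lambda>i. x - axis i 1)"
  unfolding lat_nbrs_def by auto

lemma finite_lat_nbrs [simp]: "finite (lat_nbrs x)"
  by (simp add: lat_nbrs_eq)

lemma sum_lat_nbrs:
  "(\<Sum>z\<in>lat_nbrs x. g z) = (\<Sum>i\<in>UNIV. g (x + axis i 1) + g (x - axis i 1))"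
proof -
  have inj_plus: "inj (\<lambda>i. x + axis i (1::int))"
    by (rule injI) (simp add: axis_eq_axis)
  have inj_minus: "inj (\<lambda>i. x - axis i (1::int))"
    by (rule injI) (simp add: axis_eq_axis)
  have "range (\<lambda>i. x + axis i 1) \<inter> range (\<lambda>i. x - axis i (1::int)) = {}"
  proof (rule ccontr)
    assume "\<not> ?thesis"
    then obtain i j where "x + axis i 1 = x - axis j (1::int)"
      by auto
    then have "(x + axis i 1) $ i = (x - axis j 1) $ i"
      by simp
    then show False
      by (auto simp: axis_def split: if_splits)
  qed
  then show ?thesis
    unfolding lat_nbrs_eq
    by (simp add: sum.union_disjoint sum.reindex inj_plus inj_minus sum.distrib)
qed

lemma card_lat_nbrs: "card (lat_nbrs (x::int^'d)) = 2 * CARD('d)"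
proof -
  have "real (card (lat_nbrs x)) = (\<Sum>z\<in>lat_nbrs x. 1)"
    by simp
  also have "\<dots> = (\<Sum>i\<in>(UNIV::'d set). 1 + 1)"
    by (rule sum_lat_nbrs)
  finally show ?thesis
    by simp
qed

lemma lat_nbrs_sym: "z \<in> lat_nbrs y \<longleftrightarrow> y \<in> lat_nbrs z"
  unfolding lat_nbrs_def by (auto simp: algebra_simps)

lemma not_mem_lat_nbrs_self: "x \<notin> lat_nbrs x"
  unfolding lat_nbrs_def by auto

lemma disc_lap_eq_mean:
  "disc_lap \<xi> f x = ((\<Sum>z\<in>lat_nbrs x. f z) / (2 * real CARD('d)) - f (x::int^'d)) / \<xi>\<^sup>2"
  unfolding disc_lap_def by (simp add: sum_subtractf card_lat_nbrs field_simps)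

lemma disc_lap_const: "disc_lap \<xi> (\<lambda>_. c) x = 0"
  unfolding disc_lap_def by simp

lemma disc_lap_add: "disc_lap \<xi> (\<lambda>z. f z + g z) x = disc_lap \<xi> f x + disc_lap \<xi> g x"
proof -
  have "(\<Sum>z\<in>lat_nbrs x. f z + g z - (f x + g x))
      = (\<Sum>z\<in>lat_nbrs x. f z - f x) + (\<Sum>z\<in>lat_nbrs x. g z - g x)"
    by (simp add: sum.distrib[symmetric] algebra_simps)
  then show ?thesis
    unfolding disc_lap_def by (simp add: add_divide_distrib)
qed

lemma disc_lap_cmult: "disc_lap \<xi> (\<lambda>z. c * f z) x = c * disc_lap \<xi> f x"
  unfolding disc_lap_def by (simp add: sum_distrib_left right_diff_distrib[symmetric])

lemma disc_lap_diff: "disc_lap \<xi> (\<lambda>z. f z - g z) x = disc_lap \<xi> f x - disc_lap \<xi> g x"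
  using disc_lap_add[of \<xi> f "\<lambda>z. - 1 * g z"] disc_lap_cmult[of \<xi> "- 1" g] by simp

lemma disc_lap_sum: "disc_lap \<xi> (\<lambda>z. \<Sum>y\<in>S. f y z) x = (\<Sum>y\<in>S. disc_lap \<xi> (f y) x)"
  by (induction S rule: infinite_finite_induct) (simp_all add: disc_lap_const disc_lap_add)

lemma disc_lap_tendsto:
  assumes "\<And>z. (\<lambda>k. f k z) \<longlonglongrightarrow> g z"
  shows "(\<lambda>k. disc_lap \<xi> (f k) x) \<longlonglongrightarrow> disc_lap \<xi> g x"
  unfolding disc_lap_def divide_inverse by (intro tendsto_intros assms)

lemma disc_lap_ddelta:
  assumes "\<xi> \<noteq> 0"
  shows "\<xi>\<^sup>2 * disc_lap \<xi> (ddelta x) y =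
    (if y \<in> lat_nbrs x then 1 / (2 * real CARD('d)) else 0) - (if y = (x::int^'d) then 1 else 0)"
proof -
  have "(\<Sum>z\<in>lat_nbrs y. ddelta x z) = (if x \<in> lat_nbrs y then 1 else 0)"
    unfolding ddelta_def by simp
  then show ?thesis
    unfolding disc_lap_eq_mean using assms
    by (simp add: lat_nbrs_sym[of x y] ddelta_def eq_commute[of x y])
qed

lemma sum_mult_disc_lap_ddelta:
  assumes "\<xi> \<noteq> 0" "finite N" "insert x (lat_nbrs x) \<subseteq> N"
  shows "(\<Sum>y\<in>N. g y * (\<xi>\<^sup>2 * disc_lap \<xi> (ddelta x) y)) = \<xi>\<^sup>2 * disc_lap \<xi> g (x::int^'d)"
proof -
  have "g y * (\<xi>\<^sup>2 * disc_lap \<xi> (ddelta x) y)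
      = (if y \<in> lat_nbrs x then g y / (2 * real CARD('d)) else 0) - (if y = x then g y else 0)" for y
    by (simp add: disc_lap_ddelta[OF assms(1)] right_diff_distrib)
  then have "(\<Sum>y\<in>N. g y * (\<xi>\<^sup>2 * disc_lap \<xi> (ddelta x) y))
      = (\<Sum>y\<in>N. if y \<in> lat_nbrs x then g y / (2 * real CARD('d)) else 0) - (\<Sum>y\<in>N. if y = x then g y else 0)"
    by (simp add: sum_subtractf)
  also have "\<dots> = (\<Sum>y\<in>lat_nbrs x. g y) / (2 * real CARD('d)) - g x"
    using assms(2,3) by (simp add: sum.inter_restrict[symmetric] Int_absorb1 sum_divide_distrib)
  finally show ?thesis
    unfolding disc_lap_eq_mean using assms(1) by simp
qed

lemma disc_lap_nonneg_at_local_max: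
  assumes "\<xi> \<noteq> 0" "0 \<le> disc_lap \<xi> w y" "\<forall>z\<in>lat_nbrs y. w z \<le> w y"
  shows "\<forall>z\<in>lat_nbrs y. w z = w (y::int^'d)"
proof -
  have "0 < 2 * real CARD('d) * \<xi>\<^sup>2"
    using assms(1) by simp
  then have "0 \<le> (\<Sum>z\<in>lat_nbrs y. w z - w y)"
    using assms(2) unfolding disc_lap_def by (simp add: zero_le_divide_iff)
  moreover have "(\<Sum>z\<in>lat_nbrs y. w y - w z) = - (\<Sum>z\<in>lat_nbrs y. w z - w y)"
    by (simp add: sum_negf[symmetric])
  moreover have "0 \<le> (\<Sum>z\<in>lat_nbrs y. w y - w z)"
    using assms(3) by (intro sum_nonneg) auto
  ultimately have "(\<Sum>z\<in>lat_nbrs y. w y - w z) = 0"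
    by linarith
  then show ?thesis
    using assms(3) by (subst (asm) sum_nonneg_eq_0_iff) auto
qed

lemma disc_lap_max_principle:
  fixes w :: "int^'d \<Rightarrow> real"
  assumes "\<xi> \<noteq> 0" "finite A" "\<forall>y\<in>A. 0 \<le> disc_lap \<xi> w y" "\<forall>y. y \<notin> A \<longrightarrow> w y \<le> 0"
  shows "w x \<le> 0"
proof (rule ccontr)
  assume "\<not> w x \<le> 0"
  then have "x \<in> A" "0 < w x"
    using assms(4) by auto
  define M where "M = Max (w ` A)"
  have M_ge: "w y \<le> M" if "y \<in> A" for y
    unfolding M_def using assms(2) that by auto
  have "0 < M"
    using M_ge[OF \<open>x \<in> A\<close>] \<open>0 < w x\<close> by simp
  define Amax where "Amax = {y\<in>A. w y = M}"
  have "M \<in> w ` A"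
    unfolding M_def using assms(2) \<open>x \<in> A\<close> by (intro Max_in) auto
  then have "finite Amax" "Amax \<noteq> {}"
    unfolding Amax_def using assms(2) by auto
  obtain i :: 'd where True
    by simp
  \<comment> \<open>a maximiser that is extreme in direction \<open>i\<close> has a neighbour that is a maximiser too\<close>
  obtain y where y: "y \<in> Amax" and y_extreme: "\<forall>z\<in>Amax. z $ i \<le> y $ i"
    using Max_in[of "(\<lambda>y. y $ i) ` Amax"] Max_ge[of "(\<lambda>y. y $ i) ` Amax"] \<open>finite Amax\<close> \<open>Amax \<noteq> {}\<close>
    by fastforce
  have "0 \<le> disc_lap \<xi> w y"
    using assms(3) y unfolding Amax_def by simp
  moreover have "\<forall>z\<in>lat_nbrs y. w z \<le> w y"
  proof
    fix z
    assume "z \<in> lat_nbrs y"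
    show "w z \<le> w y"
      using M_ge[of z] assms(4) \<open>0 < M\<close> y unfolding Amax_def by (cases "z \<in> A") auto
  qed
  ultimately have "\<forall>z\<in>lat_nbrs y. w z = w y"
    by (rule disc_lap_nonneg_at_local_max[OF assms(1)])
  then have "\<forall>z\<in>lat_nbrs y. w z = M"
    using y unfolding Amax_def by simp
  moreover have "y + axis i 1 \<in> lat_nbrs y"
    unfolding lat_nbrs_def by auto
  ultimately have "y + axis i 1 \<in> Amax"
    using assms(4) \<open>0 < M\<close> unfolding Amax_def by force
  then show False
    using y_extreme by (fastforce simp: axis_def)
qed

definition lat_sqnorm :: "int^'d \<Rightarrow> real" where
  "lat_sqnorm z = (\<Sum>i\<in>UNIV. (real_of_int (z $ i))\<^sup>2)"

lemma lat_sqnorm_nonneg: "0 \<le> lat_sqnorm z"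
  unfolding lat_sqnorm_def by (intro sum_nonneg) auto

lemma disc_lap_lat_sqnorm:
  assumes "\<xi> \<noteq> 0"
  shows "\<xi>\<^sup>2 * disc_lap \<xi> lat_sqnorm (x::int^'d) = 1"
proof -
  have "lat_sqnorm (x + axis i 1) + lat_sqnorm (x - axis i 1)
      = (\<Sum>j\<in>UNIV. 2 * (real_of_int (x $ j))\<^sup>2 + (if j = i then 2 else 0))" for i
    unfolding lat_sqnorm_def sum.distrib[symmetric]
    by (intro sum.cong) (auto simp: axis_def power2_eq_square algebra_simps)
  then have "(\<Sum>z\<in>lat_nbrs x. lat_sqnorm z) = (\<Sum>i\<in>(UNIV::'d set). 2 * lat_sqnorm x + 2)"
    unfolding sum_lat_nbrs by (simp add: sum.distrib lat_sqnorm_def sum_distrib_left)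
  then show ?thesis
    unfolding disc_lap_eq_mean using assms by (simp add: field_simps)
qed

lemma finite_lat_ball:
  assumes "0 < \<xi>"
  shows "finite (lat_ball \<xi> R :: (int^'d) set)"
proof -
  define K where "K = \<lceil>R / \<xi>\<rceil>"
  have "lat_ball \<xi> R \<subseteq> (\<lambda>f. \<chi> i. f i) ` Pi\<^sub>E (UNIV :: 'd set) (\<lambda>_. {-K..K})"
  proof
    fix z :: "int^'d"
    assume "z \<in> lat_ball \<xi> R"
    have "z $ i \<in> {-K..K}" for i
    proof -
      have "\<xi> * \<bar>real_of_int (z $ i)\<bar> = \<bar>lat_point \<xi> z $ i\<bar>"
        using assms by (simp add: lat_point_def abs_mult)
      also have "\<dots> < R"
        using component_le_norm_cart[of "lat_point \<xi> z" i] \<open>z \<in> lat_ball \<xi> R\<close>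
        unfolding lat_ball_def by simp
      finally have "\<bar>real_of_int (z $ i)\<bar> < R / \<xi>"
        using assms by (simp add: field_simps)
      also have "R / \<xi> \<le> real_of_int K"
        unfolding K_def by simp
      finally show ?thesis
        by (simp add: abs_less_iff)
    qed
    then have "(\<lambda>i. z $ i) \<in> Pi\<^sub>E UNIV (\<lambda>_. {-K..K})"
      by (simp add: PiE_iff)
    then show "z \<in> (\<lambda>f. \<chi> i. f i) ` Pi\<^sub>E UNIV (\<lambda>_. {-K..K})"
      by (intro image_eqI[where x = "\<lambda>i. z $ i"]) auto
  qed
  then show ?thesis
    by (rule finite_subset) (intro finite_imageI finite_PiE, auto)
qed

section \<open>Fourier representation of simple random walk\<close>

definition circle_measure :: "real measure" where
  "circle_measure = restrict_space lborel {-pi..pi}"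

definition torus_measure :: "('d::finite \<Rightarrow> real) measure" where
  "torus_measure = Pi\<^sub>M UNIV (\<lambda>_. circle_measure)"

definition phase :: "('d::finite \<Rightarrow> real) \<Rightarrow> int^'d \<Rightarrow> real" where
  "phase \<theta> z = (\<Sum>i\<in>UNIV. \<theta> i * real_of_int (z $ i))"

text \<open>The characteristic function \<open>\<theta> \<mapsto> E exp(i \<theta>\<cdot>X\<^sub>1)\<close> of one step of the walk.\<close>

definition step_char :: "('d::finite \<Rightarrow> real) \<Rightarrow> real" where
  "step_char \<theta> = (\<Sum>i\<in>UNIV. cos (\<theta> i)) / real CARD('d)"

definition sqnorm :: "('d::finite \<Rightarrow> real) \<Rightarrow> real" where
  "sqnorm \<theta> = (\<Sum>i\<in>UNIV. (\<theta> i)\<^sup>2)"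

interpretation torus: product_sigma_finite "\<lambda>_::'d::finite. circle_measure"
  unfolding product_sigma_finite_def circle_measure_def
  by (auto intro!: finite_measure.axioms(1) finite_measureI simp: emeasure_restrict_space)

lemma space_torus_measure: "space (torus_measure :: ('d::finite \<Rightarrow> real) measure) = Pi\<^sub>E UNIV (\<lambda>_. {-pi..pi})"
  unfolding torus_measure_def circle_measure_def by (simp add: space_PiM)

lemma finite_measure_torus: "finite_measure (torus_measure :: ('d::finite \<Rightarrow> real) measure)"
proof (rule finite_measureI)
  have "emeasure (torus_measure :: ('d \<Rightarrow> real) measure) (space torus_measure)
      = (\<Prod>i\<in>(UNIV::'d set). emeasure circle_measure {-pi..pi})"
    unfolding space_torus_measure unfolding torus_measure_def
    by (rule torus.emeasure_PiM) (auto simp: circle_measure_def sets_restrict_space)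
  then show "emeasure (torus_measure :: ('d \<Rightarrow> real) measure) (space torus_measure) \<noteq> \<infinity>"
    by (simp add: ennreal_prod_eq_top circle_measure_def emeasure_restrict_space ennreal_power)
qed

lemma measurable_torus_component [measurable]:
  "(\<lambda>\<theta>. \<theta> i) \<in> borel_measurable (torus_measure :: ('d::finite \<Rightarrow> real) measure)"
  using measurable_component_singleton[of i UNIV "\<lambda>_. circle_measure"]
  unfolding torus_measure_def circle_measure_def measurable_restrict_space2_iff by simp

lemma measurable_step_char [measurable]: "step_char \<in> borel_measurable torus_measure"
  unfolding step_char_def by measurable

lemma measurable_phase [measurable]: "(\<lambda>\<theta>. phase \<theta> z) \<in> borel_measurable torus_measure"
  unfolding phase_def by measurable

lemma integrable_torus_bounded:
  fixes f :: "('d::finite \<Rightarrow> real) \<Rightarrow> real"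
  assumes "f \<in> borel_measurable torus_measure" "\<And>\<theta>. \<bar>f \<theta>\<bar> \<le> B"
  shows "integrable torus_measure f"
  using finite_measure.integrable_const_bound[OF finite_measure_torus, of f B] assms by auto

lemma circle_measure_integral_continuous:
  fixes f :: "real \<Rightarrow> 'a::euclidean_space"
  assumes "continuous_on {-pi..pi} f"
  shows "integrable circle_measure f" "integral\<^sup>L circle_measure f = (LBINT x=-pi..pi. f x)"
proof -
  have "set_integrable lborel {-pi..pi} f"
    by (rule borel_integrable_atLeastAtMost') (use assms in auto)
  then show "integrable circle_measure f"
    unfolding circle_measure_def set_integrable_def by (subst integrable_restrict_space) auto
  show "integral\<^sup>L circle_measure f = (LBINT x=-pi..pi. f x)"
    unfolding circle_measure_def
    by (subst integral_restrict_space) (auto simp: interval_integral_Icc set_lebesgue_integral_def)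
qed

lemma integral_circle_cis:
  "integral\<^sup>L circle_measure (\<lambda>t. cis (t * real_of_int k)) = (if k = 0 then 2 * pi else 0)"
proof (cases "k = 0")
  case True
  then show ?thesis
    by (simp add: circle_measure_def measure_restrict_space scaleR_conv_of_real)
next
  case False
  have "(LBINT t=-pi..pi. cis (t * real_of_int k))
      = cis (pi * real_of_int k) / (\<i> * k) - cis (- pi * real_of_int k) / (\<i> * k)"
  proof (rule interval_integral_FTC_finite)
    show "continuous_on {min (- pi) pi..max (- pi) pi} (\<lambda>t. cis (t * real_of_int k))"
      by (intro continuous_intros)
    fix x :: real
    have "((\<lambda>z. exp (\<i> * (z * of_int k)) / (\<i> * k)) has_field_derivative exp (\<i> * (of_real x * of_int k))) (at (of_real x))"
      using False by (auto intro!: derivative_eq_intros simp: field_simps)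
    from has_vector_derivative_real_field[OF this]
    show "((\<lambda>t. cis (t * real_of_int k) / (\<i> * k)) has_vector_derivative cis (x * real_of_int k))
        (at x within {min (- pi) pi..max (- pi) pi})"
      by (simp add: cis_conv_exp)
  qed
  moreover have "cis (- pi * real_of_int k) = cis (pi * real_of_int k)"
    by (simp add: complex_eq_iff)
  ultimately have "(LBINT t=-pi..pi. cis (t * real_of_int k)) = 0"
    by simp
  then show ?thesis
    using False circle_measure_integral_continuous(2)[of "\<lambda>t. cis (t * real_of_int k)"]
    by (simp add: continuous_on_cis continuous_on_mult_right)
qed

lemma integral_torus_cos_phase:
  "integral\<^sup>L (torus_measure :: ('d::finite \<Rightarrow> real) measure) (\<lambda>\<theta>. cos (phase \<theta> z))
     = (if z = 0 then (2 * pi) ^ CARD('d) else 0)"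
proof -
  have cis_phase: "cis (phase \<theta> z) = (\<Prod>i\<in>UNIV. cis (\<theta> i * real_of_int (z $ i)))" for \<theta> :: "'d \<Rightarrow> real"
    unfolding phase_def cis_conv_exp by (simp add: exp_sum[symmetric] sum_distrib_left)
  have integrable: "integrable (torus_measure :: ('d \<Rightarrow> real) measure) (\<lambda>\<theta>. cis (phase \<theta> z))"
    unfolding cis_phase torus_measure_def
    by (rule torus.product_integrable_prod) (simp_all add: circle_measure_integral_continuous continuous_on_cis continuous_on_mult_right)
  have "integral\<^sup>L (torus_measure :: ('d \<Rightarrow> real) measure) (\<lambda>\<theta>. cis (phase \<theta> z))
      = (\<Prod>i\<in>UNIV. integral\<^sup>L circle_measure (\<lambda>t. cis (t * real_of_int (z $ i))))"
    unfolding cis_phase torus_measure_def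
    by (rule torus.product_integral_prod) (simp_all add: circle_measure_integral_continuous continuous_on_cis continuous_on_mult_right)
  also have "\<dots> = (\<Prod>i\<in>UNIV. complex_of_real (if z $ i = 0 then 2 * pi else 0))"
    by (simp add: integral_circle_cis)
  also have "\<dots> = (if z = 0 then (2 * pi) ^ CARD('d) else 0)"
    by (auto simp: vec_eq_iff)
  finally show ?thesis
    using integral_bounded_linear[OF bounded_linear_Re integrable] by (simp add: power_mult_distrib)
qed

lemma abs_step_char_le_1: "\<bar>step_char (\<theta> :: 'd::finite \<Rightarrow> real)\<bar> \<le> 1"
proof -
  have "\<bar>\<Sum>i\<in>(UNIV::'d set). cos (\<theta> i)\<bar> \<le> (\<Sum>i\<in>(UNIV::'d set). 1)"
    by (rule order_trans[OF sum_abs]) (intro sum_mono, simp)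
  then show ?thesis
    unfolding step_char_def by (simp add: field_simps)
qed

lemma integrable_torus_step_char_power_cos:
  "integrable torus_measure (\<lambda>\<theta>. step_char \<theta> ^ n * cos (phase \<theta> z))"
  by (rule integrable_torus_bounded[where B = 1])
     (auto simp: abs_mult power_abs abs_step_char_le_1 intro!: mult_le_one power_le_one)

lemma phase_zero [simp]: "phase \<theta> 0 = 0"
  unfolding phase_def by simp

lemma phase_diff: "phase \<theta> (u - v) = phase \<theta> u - phase \<theta> v"
  unfolding phase_def by (simp add: algebra_simps sum_subtractf)

lemma phase_add: "phase \<theta> (u + v) = phase \<theta> u + phase \<theta> v"
  unfolding phase_def by (simp add: algebra_simps sum.distrib)

lemma phase_axis: "phase \<theta> (axis i 1) = \<theta> i"
  unfolding phase_def axis_def by (simp add: if_distrib cong: if_cong)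

lemma mean_cos_phase_lat_nbrs:
  "(\<Sum>z\<in>lat_nbrs x. cos (phase \<theta> (y - z))) / (2 * real CARD('d))
     = step_char \<theta> * cos (phase \<theta> (y - (x::int^'d)))"
proof -
  let ?a = "phase \<theta> (y - x)"
  have "(\<Sum>z\<in>lat_nbrs x. cos (phase \<theta> (y - z))) = (\<Sum>i\<in>UNIV. cos (?a - \<theta> i) + cos (?a + \<theta> i))"
    by (simp add: sum_lat_nbrs phase_diff phase_add phase_axis algebra_simps)
  also have "\<dots> = (\<Sum>i\<in>UNIV. 2 * cos ?a * cos (\<theta> i))"
    by (simp add: cos_diff cos_add mult_ac)
  also have "\<dots> = 2 * real CARD('d) * (step_char \<theta> * cos ?a)"
    by (simp add: step_char_def sum_distrib_left[symmetric])
  finally show ?thesis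
    by simp
qed

theorem srw_p_fourier:
  "(2 * pi) ^ CARD('d) * srw_p n x y
     = integral\<^sup>L torus_measure (\<lambda>\<theta>. step_char \<theta> ^ n * cos (phase \<theta> (y - (x::int^'d))))"
proof (induction n arbitrary: x)
  case 0
  then show ?case
    by (simp add: integral_torus_cos_phase)
next
  case (Suc n)
  have "(2 * pi) ^ CARD('d) * srw_p (Suc n) x y
      = (\<Sum>z\<in>lat_nbrs x. (2 * pi) ^ CARD('d) * srw_p n z y) / (2 * real CARD('d))"
    by (simp add: sum_distrib_left)
  also have "\<dots> = (\<Sum>z\<in>lat_nbrs x. integral\<^sup>L torus_measure
      (\<lambda>\<theta>. step_char \<theta> ^ n * cos (phase \<theta> (y - z)))) / (2 * real CARD('d))"
    by (simp only: Suc.IH)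
  also have "\<dots> = integral\<^sup>L torus_measure
      (\<lambda>\<theta>. step_char \<theta> ^ n * ((\<Sum>z\<in>lat_nbrs x. cos (phase \<theta> (y - z))) / (2 * real CARD('d))))"
    by (simp add: integrable_torus_step_char_power_cos sum_distrib_left)
  also have "\<dots> = integral\<^sup>L torus_measure (\<lambda>\<theta>. step_char \<theta> ^ Suc n * cos (phase \<theta> (y - x)))"
    by (intro Bochner_Integration.integral_cong refl) (simp only: mean_cos_phase_lat_nbrs, simp add: mult_ac)
  finally show ?case .
qed

lemma Maclaurin_cos_bound: "\<bar>cos (x::real) - (\<Sum>m<n. cos_coeff m * x ^ m)\<bar> \<le> \<bar>x\<bar> ^ n / fact n"
proof -
  obtain t where "cos x = (\<Sum>m<n. cos_coeff m * x ^ m) + cos (t + 1/2 * real n * pi) / fact n * x ^ n"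
    using Maclaurin_cos_expansion by blast
  moreover have "\<bar>cos (t + 1/2 * real n * pi) / fact n * x ^ n\<bar> \<le> \<bar>x\<bar> ^ n / fact n"
    by (simp add: abs_mult power_abs divide_right_mono mult_left_le_one_le)
  ultimately show ?thesis
    by simp
qed

lemma one_minus_cos_le: "1 - cos x \<le> (x::real)\<^sup>2 / 2"
proof -
  have "(\<Sum>m<2. cos_coeff m * x ^ m) = 1"
    by (simp add: cos_coeff_def lessThan_nat_numeral fact_numeral)
  then show ?thesis
    using Maclaurin_cos_bound[of x 2] by (simp add: abs_le_iff)
qed

lemma one_minus_cos_ge:
  assumes "\<bar>x\<bar> \<le> pi"
  shows "x\<^sup>2 / 12 \<le> 1 - cos x"
proof -
  have "(\<Sum>m<4. cos_coeff m * x ^ m) = 1 - x\<^sup>2 / 2"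
    by (simp add: cos_coeff_def lessThan_nat_numeral fact_numeral)
  then have "\<bar>cos x - (1 - x\<^sup>2 / 2)\<bar> \<le> \<bar>x\<bar> ^ 4 / fact 4"
    using Maclaurin_cos_bound[of x 4] by simp
  then have "cos x \<le> 1 - x\<^sup>2 / 2 + x ^ 4 / 24"
    unfolding abs_le_iff by (simp add: fact_numeral)
  moreover have "x\<^sup>2 \<le> 10"
  proof -
    have "x\<^sup>2 \<le> pi\<^sup>2"
      using assms abs_le_square_iff[of x pi] by simp
    also have "\<dots> \<le> 3.15\<^sup>2"
      using pi_approx by (intro power_mono) auto
    finally show ?thesis
      by (simp add: power2_eq_square)
  qed
  then have "x\<^sup>2 * x\<^sup>2 \<le> 10 * x\<^sup>2"
    by (rule mult_right_mono) simp
  then have "x ^ 4 \<le> 10 * x\<^sup>2"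
    by (simp add: power4_eq_xxxx power2_eq_square mult.assoc)
  ultimately show ?thesis
    by simp
qed

lemma abs_le_pi_torus:
  assumes "\<theta> \<in> space (torus_measure :: ('d::finite \<Rightarrow> real) measure)"
  shows "\<bar>\<theta> i\<bar> \<le> pi"
proof -
  have "\<theta> i \<in> {-pi..pi}"
    using assms by (simp add: space_torus_measure PiE_iff)
  then show ?thesis
    by (simp add: abs_le_iff minus_le_iff)
qed

lemma step_char_gap:
  assumes "\<theta> \<in> space (torus_measure :: ('d::finite \<Rightarrow> real) measure)"
  shows "sqnorm \<theta> / (12 * real CARD('d)) \<le> 1 - step_char \<theta>"
proof -
  have "(\<Sum>i\<in>(UNIV::'d set). (\<theta> i)\<^sup>2 / 12) \<le> (\<Sum>i\<in>(UNIV::'d set). 1 - cos (\<theta> i))"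
    by (intro sum_mono one_minus_cos_ge abs_le_pi_torus[OF assms])
  moreover have "1 - step_char \<theta> = (\<Sum>i\<in>(UNIV::'d set). 1 - cos (\<theta> i)) / real CARD('d)"
    by (simp add: step_char_def sum_subtractf field_simps)
  ultimately show ?thesis
    by (simp add: sqnorm_def sum_divide_distrib[symmetric] divide_right_mono field_simps)
qed

lemma phase_sq_le: "(phase \<theta> z)\<^sup>2 \<le> sqnorm \<theta> * lat_sqnorm z"
proof -
  let ?u = "(\<chi> i. \<theta> i) :: real^'a" and ?v = "(\<chi> i. real_of_int (z $ i)) :: real^'a"
  have "phase \<theta> z = inner ?u ?v" "inner ?u ?u = sqnorm \<theta>" "inner ?v ?v = lat_sqnorm z"
    by (simp_all add: phase_def sqnorm_def lat_sqnorm_def inner_vec_def power2_eq_square)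
  then show ?thesis
    using Cauchy_Schwarz_ineq[of ?u ?v] by simp
qed

lemma abs_sum_power_le:
  assumes "\<bar>p\<bar> \<le> 1" "p < (1::real)"
  shows "\<bar>\<Sum>k<n. p ^ k\<bar> \<le> 2 / (1 - p)"
proof -
  have "\<bar>p ^ n\<bar> \<le> 1"
    using assms(1) by (simp add: power_abs power_le_one)
  then have "\<bar>1 - p ^ n\<bar> \<le> 2"
    unfolding abs_le_iff by linarith
  then show ?thesis
    using assms by (simp add: sum_gp_strict divide_right_mono)
qed

lemma abs_cos_less_1:
  assumes "\<bar>t\<bar> \<le> pi" "t \<notin> {-pi, 0, pi}"
  shows "\<bar>cos t\<bar> < 1"
proof (rule ccontr)
  assume "\<not> \<bar>cos t\<bar> < 1"
  then have "(cos t)\<^sup>2 = 1"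
    using abs_cos_le_one[of t] by (simp add: abs_square_eq_1)
  then have "sin t = 0"
    using sin_cos_squared_add[of t] by simp
  then obtain k :: int where k: "t = of_int k * pi"
    using sin_zero_iff_int2 by blast
  then have "\<bar>real_of_int k\<bar> \<le> 1"
    using assms(1) by (simp add: abs_mult)
  then have "k \<in> {-1, 0, 1}"
    by auto
  then show False
    using assms(2) k by auto
qed

lemma AE_torus_generic:
  "AE \<theta> in (torus_measure :: ('d::finite \<Rightarrow> real) measure). \<forall>i. \<theta> i \<notin> {-pi, 0, pi}"
proof -
  have coord: "AE \<theta> in (torus_measure :: ('d \<Rightarrow> real) measure). \<theta> i \<notin> {-pi, 0, pi}" for i
  proof (rule AE_I')
    define A where "A j = (if j = i then {-pi, 0, pi} else {-pi..pi})" for j :: 'd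
    have A_sets: "A j \<in> sets circle_measure" for j
      unfolding A_def circle_measure_def by (auto simp: sets_restrict_space_iff)
    have "emeasure circle_measure {-pi, 0, pi} = emeasure lborel {-pi, 0, pi::real}"
      unfolding circle_measure_def by (rule emeasure_restrict_space) auto
    also have "\<dots> = 0"
      by (rule emeasure_lborel_countable) simp
    finally have "emeasure (torus_measure :: ('d \<Rightarrow> real) measure) (Pi\<^sub>E UNIV A) = 0"
      unfolding torus_measure_def using A_sets
      by (subst torus.emeasure_PiM) (auto simp: A_def intro!: prod_zero exI[of _ i])
    moreover have "Pi\<^sub>E UNIV A \<in> sets (torus_measure :: ('d \<Rightarrow> real) measure)"
      unfolding torus_measure_def by (rule sets_PiM_I_finite) (simp_all add: A_sets)
    ultimately show "Pi\<^sub>E UNIV A \<in> null_sets (torus_measure :: ('d \<Rightarrow> real) measure)"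
      by (simp add: null_sets_def)
    show "{\<theta> \<in> space torus_measure. \<not> \<theta> i \<notin> {-pi, 0, pi}} \<subseteq> Pi\<^sub>E UNIV A"
      by (auto simp: space_torus_measure A_def PiE_iff)
  qed
  have "AE \<theta> in (torus_measure :: ('d \<Rightarrow> real) measure). \<forall>i\<in>UNIV. \<theta> i \<notin> {-pi, 0, pi}"
    by (rule AE_finite_allI) (simp, rule coord)
  then show ?thesis
    by simp
qed

lemma generic_point_torus:
  assumes "\<theta> \<in> space (torus_measure :: ('d::finite \<Rightarrow> real) measure)" "\<forall>i. \<theta> i \<notin> {-pi, 0, pi}"
  shows "0 < sqnorm \<theta>" "\<bar>step_char \<theta>\<bar> < 1"
proof -
  obtain i :: 'd where True
    by simp
  have "0 < (\<theta> i)\<^sup>2"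
    using assms(2) by auto
  also have "\<dots> \<le> sqnorm \<theta>"
    unfolding sqnorm_def by (rule member_le_sum) auto
  finally show "0 < sqnorm \<theta>" .
  have "\<bar>cos (\<theta> i)\<bar> < 1"
    using abs_le_pi_torus[OF assms(1)] assms(2) by (intro abs_cos_less_1) auto
  then have "(\<Sum>j\<in>(UNIV::'d set). \<bar>cos (\<theta> j)\<bar>) < (\<Sum>j\<in>(UNIV::'d set). 1)"
    by (intro sum_strict_mono_ex1) auto
  then have "\<bar>\<Sum>j\<in>(UNIV::'d set). cos (\<theta> j)\<bar> < real CARD('d)"
    by (intro order_le_less_trans[OF sum_abs]) simp
  then show "\<bar>step_char \<theta>\<bar> < 1"
    by (simp add: step_char_def)
qed

lemma abs_sum_step_char_power_le:
  assumes "\<theta> \<in> space (torus_measure :: ('d::finite \<Rightarrow> real) measure)" "0 < sqnorm \<theta>"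
  shows "\<bar>\<Sum>k<n. step_char \<theta> ^ k\<bar> \<le> 24 * real CARD('d) / sqnorm \<theta>"
proof -
  have gap: "sqnorm \<theta> / (12 * real CARD('d)) \<le> 1 - step_char \<theta>"
    by (rule step_char_gap[OF assms(1)])
  moreover have "0 < sqnorm \<theta> / (12 * real CARD('d))"
    using assms(2) by simp
  ultimately have "\<bar>\<Sum>k<n. step_char \<theta> ^ k\<bar> \<le> 2 / (1 - step_char \<theta>)"
    by (intro abs_sum_power_le abs_step_char_le_1) linarith
  also have "\<dots> \<le> 2 / (sqnorm \<theta> / (12 * real CARD('d)))"
    using gap \<open>0 < sqnorm \<theta> / (12 * real CARD('d))\<close> by (intro divide_left_mono mult_pos_pos) auto
  finally show ?thesis
    by simp
qed

lemma srw_p_partial_sum_fourier: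
  "(2 * pi) ^ CARD('d) * (\<Sum>k<n. srw_p k x y)
     = integral\<^sup>L torus_measure (\<lambda>\<theta>. cos (phase \<theta> (y - (x::int^'d))) * (\<Sum>k<n. step_char \<theta> ^ k))"
proof -
  have "(2 * pi) ^ CARD('d) * (\<Sum>k<n. srw_p k x y)
      = (\<Sum>k<n. integral\<^sup>L torus_measure (\<lambda>\<theta>. step_char \<theta> ^ k * cos (phase \<theta> (y - x))))"
    by (simp only: sum_distrib_left srw_p_fourier)
  also have "\<dots> = integral\<^sup>L torus_measure (\<lambda>\<theta>. \<Sum>k<n. step_char \<theta> ^ k * cos (phase \<theta> (y - x)))"
    by (rule Bochner_Integration.integral_sum[symmetric]) (rule integrable_torus_step_char_power_cos)
  also have "\<dots> = integral\<^sup>L torus_measure (\<lambda>\<theta>. cos (phase \<theta> (y - x)) * (\<Sum>k<n. step_char \<theta> ^ k))"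
    by (intro Bochner_Integration.integral_cong refl) (simp add: sum_distrib_right mult.commute)
  finally show ?thesis .
qed

lemma srw_p_tendsto_0: "(\<lambda>n. srw_p n x (y::int^'d)) \<longlonglongrightarrow> 0"
proof -
  let ?f = "\<lambda>n \<theta>. step_char \<theta> ^ n * cos (phase \<theta> (y - x))"
  have "(\<lambda>n. integral\<^sup>L (torus_measure :: ('d \<Rightarrow> real) measure) (?f n))
      \<longlonglongrightarrow> integral\<^sup>L (torus_measure :: ('d \<Rightarrow> real) measure) (\<lambda>_. 0)"
  proof (rule integral_dominated_convergence[where w = "\<lambda>_. 1"])
    show "AE \<theta> in torus_measure. norm (?f n \<theta>) \<le> 1" for n
      by (auto simp: abs_mult power_abs abs_step_char_le_1 intro!: mult_le_one power_le_one)
    show "AE \<theta> in torus_measure. (\<lambda>n. ?f n \<theta>) \<longlonglongrightarrow> 0"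
      using AE_space AE_torus_generic
      by eventually_elim (intro tendsto_mult_left_zero LIMSEQ_power_zero, simp add: generic_point_torus(2))
  qed (simp_all add: finite_measure.integrable_const[OF finite_measure_torus])
  then have "(\<lambda>n. (2 * pi) ^ CARD('d) * srw_p n x y / (2 * pi) ^ CARD('d)) \<longlonglongrightarrow> 0"
    unfolding srw_p_fourier by (simp add: tendsto_divide_zero)
  then show ?thesis
    by simp
qed

lemma integrable_circle_abs_powr:
  assumes "0 < a" "a < 1"
  shows "integrable circle_measure (\<lambda>t. \<bar>t\<bar> powr (- a))"
proof -
  let ?I = "pi powr (1 - a) / (1 - a)"
  have "((\<lambda>t. t powr (- a)) has_integral ?I) {0..pi}"
    using has_integral_powr_from_0[of "- a" pi] assms by simp
  then have right: "((\<lambda>t. \<bar>t\<bar> powr (- a)) has_integral ?I) {0..pi}"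
    by (rule has_integral_eq[rotated]) simp
  then have left: "((\<lambda>t. \<bar>t\<bar> powr (- a)) has_integral ?I) {-pi..0}"
    using has_integral_reflect_real[where f = "\<lambda>t. \<bar>t\<bar> powr (- a)" and a = 0 and b = pi] by simp
  have "((\<lambda>t. \<bar>t\<bar> powr (- a)) has_integral (?I + ?I)) {-pi..pi}"
    by (rule has_integral_combine[OF _ _ left right]) auto
  from nn_integral_has_integral_lebesgue'[OF _ this]
  have "(\<integral>\<^sup>+ t. ennreal (\<bar>t\<bar> powr (- a)) * indicator {-pi..pi} t \<partial>lborel) = ennreal (?I + ?I)"
    by simp
  moreover have "(\<integral>\<^sup>+ t. ennreal (indicator {-pi..pi} t *\<^sub>R \<bar>t\<bar> powr (- a)) \<partial>lborel)
      = (\<integral>\<^sup>+ t. ennreal (\<bar>t\<bar> powr (- a)) * indicator {-pi..pi} t \<partial>lborel)"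
    by (intro nn_integral_cong) (auto split: split_indicator)
  ultimately have "integrable lborel (\<lambda>t. indicator {-pi..pi} t *\<^sub>R \<bar>t\<bar> powr (- a))"
    by (intro integrableI_nonneg) auto
  then show ?thesis
    unfolding circle_measure_def by (subst integrable_restrict_space) auto
qed

text \<open>For \<open>d \<ge> 3\<close> the singularity \<open>1 / |\<theta>|\<^sup>2\<close> of \<open>1 / (1 - step_char \<theta>)\<close> is dominated by
  a product of one-dimensional integrable singularities.\<close>

lemma inverse_sqnorm_le_prod_powr:
  assumes "\<forall>i. (\<theta> :: 'd::finite \<Rightarrow> real) i \<noteq> 0"
  shows "1 / sqnorm \<theta> \<le> (\<Prod>i\<in>UNIV. \<bar>\<theta> i\<bar> powr (- (2 / real CARD('d))))"
proof -
  obtain i0 :: 'd where i0: "\<forall>i. \<bar>\<theta> i\<bar> \<le> \<bar>\<theta> i0\<bar>"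
    using Max_in[of "range (\<lambda>i. \<bar>\<theta> i\<bar>)"] Max_ge[of "range (\<lambda>i. \<bar>\<theta> i\<bar>)"] by fastforce
  define m where "m = \<bar>\<theta> i0\<bar>"
  have "0 < m"
    using assms unfolding m_def by simp
  have "m\<^sup>2 \<le> sqnorm \<theta>"
    unfolding m_def sqnorm_def by (simp, rule member_le_sum) auto
  moreover have "0 < m\<^sup>2"
    using \<open>0 < m\<close> by simp
  ultimately have "1 / sqnorm \<theta> \<le> 1 / m\<^sup>2"
    by (intro divide_left_mono mult_pos_pos) linarith+
  also have "\<dots> = m powr (real CARD('d) * (- (2 / real CARD('d))))"
    using \<open>0 < m\<close> by (simp add: powr_minus_divide powr_realpow[of m 2, simplified])
  also have "\<dots> = (\<Prod>i\<in>(UNIV::'d set). m powr (- (2 / real CARD('d))))"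
    using \<open>0 < m\<close> by (simp add: powr_power)
  also have "\<dots> \<le> (\<Prod>i\<in>UNIV. \<bar>\<theta> i\<bar> powr (- (2 / real CARD('d))))"
    using i0 assms unfolding m_def by (intro prod_mono conjI powr_mono2') auto
  finally show ?thesis .
qed

lemma summable_srw_p:
  assumes "3 \<le> CARD('d)"
  shows "summable (\<lambda>k. srw_p k x (y::int^'d))"
proof (rule summableI_nonneg_bounded)
  show "0 \<le> srw_p k x y" for k
    by (induction k arbitrary: x) (auto intro!: sum_nonneg divide_nonneg_pos)
  define H where "H \<theta> = 24 * real CARD('d) * (\<Prod>i\<in>UNIV. \<bar>\<theta> i\<bar> powr (- (2 / real CARD('d))))"
    for \<theta> :: "'d \<Rightarrow> real"
  have "integrable torus_measure H"
    unfolding H_def torus_measure_def using assms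
    by (intro integrable_mult_right torus.product_integrable_prod integrable_circle_abs_powr) auto
  fix n
  have "(2 * pi) ^ CARD('d) * (\<Sum>k<n. srw_p k x y)
      = integral\<^sup>L torus_measure (\<lambda>\<theta>. cos (phase \<theta> (y - x)) * (\<Sum>k<n. step_char \<theta> ^ k))"
    by (rule srw_p_partial_sum_fourier)
  also have "\<dots> \<le> integral\<^sup>L torus_measure H"
  proof (rule integral_mono_AE')
    show "AE \<theta> in torus_measure. cos (phase \<theta> (y - x)) * (\<Sum>k<n. step_char \<theta> ^ k) \<le> H \<theta>"
      using AE_space AE_torus_generic
    proof eventually_elim
      case (elim \<theta>)
      then have "\<forall>i. \<theta> i \<noteq> 0"
        by auto
      have "cos (phase \<theta> (y - x)) * (\<Sum>k<n. step_char \<theta> ^ k) \<le> \<bar>\<Sum>k<n. step_char \<theta> ^ k\<bar>"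
        by (rule order_trans[OF abs_ge_self]) (simp add: abs_mult mult_left_le_one_le)
      also have "\<dots> \<le> 24 * real CARD('d) * (1 / sqnorm \<theta>)"
        using abs_sum_step_char_power_le[OF elim(1) generic_point_torus(1)[OF elim]] by simp
      also have "\<dots> \<le> H \<theta>"
        unfolding H_def using inverse_sqnorm_le_prod_powr[OF \<open>\<forall>i. \<theta> i \<noteq> 0\<close>] by (intro mult_left_mono) auto
      finally show ?case .
    qed
  qed (use \<open>integrable torus_measure H\<close> in \<open>auto simp: H_def[abs_def] prod_nonneg\<close>)
  finally show "(\<Sum>k<n. srw_p k x y) \<le> integral\<^sup>L torus_measure H / (2 * pi) ^ CARD('d)"
    by (simp add: field_simps)
qed

lemma exp_visits_diff_fourier:
  "(2 * pi) ^ CARD('d) * (exp_visits n x x - exp_visits n x y)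
     = integral\<^sup>L torus_measure (\<lambda>\<theta>. (1 - cos (phase \<theta> (y - (x::int^'d)))) * (\<Sum>k<Suc n. step_char \<theta> ^ k))"
proof -
  have integrable: "integrable torus_measure (\<lambda>\<theta>. cos (phase \<theta> z) * (\<Sum>k<Suc n. step_char \<theta> ^ k))"
    for z :: "int^'d"
  proof (rule integrable_torus_bounded[where B = "real (Suc n)"])
    fix \<theta> :: "'d \<Rightarrow> real"
    have "\<bar>\<Sum>k<Suc n. step_char \<theta> ^ k\<bar> \<le> (\<Sum>k<Suc n. 1)"
      by (rule order_trans[OF sum_abs sum_mono]) (simp add: power_abs abs_step_char_le_1 power_le_one)
    with abs_cos_le_one[of "phase \<theta> z"]
    have "\<bar>cos (phase \<theta> z)\<bar> * \<bar>\<Sum>k<Suc n. step_char \<theta> ^ k\<bar> \<le> 1 * real (Suc n)"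
      by (intro mult_mono) auto
    then show "\<bar>cos (phase \<theta> z) * (\<Sum>k<Suc n. step_char \<theta> ^ k)\<bar> \<le> real (Suc n)"
      by (simp add: abs_mult)
  qed simp
  have "exp_visits n u v = (\<Sum>k<Suc n. srw_p k u v)" for u v :: "int^'d"
    unfolding exp_visits_def by (simp add: lessThan_Suc_atMost)
  then have "(2 * pi) ^ CARD('d) * (exp_visits n x x - exp_visits n x y)
      = integral\<^sup>L torus_measure (\<lambda>\<theta>. cos (phase \<theta> (x - x)) * (\<Sum>k<Suc n. step_char \<theta> ^ k))
        - integral\<^sup>L torus_measure (\<lambda>\<theta>. cos (phase \<theta> (y - x)) * (\<Sum>k<Suc n. step_char \<theta> ^ k))"
    by (simp only: right_diff_distrib srw_p_partial_sum_fourier)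
  also have "\<dots> = integral\<^sup>L torus_measure (\<lambda>\<theta>. cos (phase \<theta> (x - x)) * (\<Sum>k<Suc n. step_char \<theta> ^ k)
      - cos (phase \<theta> (y - x)) * (\<Sum>k<Suc n. step_char \<theta> ^ k))"
    by (rule Bochner_Integration.integral_diff[OF integrable integrable, symmetric])
  also have "\<dots> = integral\<^sup>L torus_measure (\<lambda>\<theta>. (1 - cos (phase \<theta> (y - x))) * (\<Sum>k<Suc n. step_char \<theta> ^ k))"
    by (simp add: phase_diff left_diff_distrib)
  finally show ?thesis .
qed

text \<open>The potential kernel exists in every dimension: \<open>(1 - cos (\<theta>\<cdot>z)) / (1 - step_char \<theta>)\<close>
  is bounded, since both numerator and denominator vanish quadratically at \<open>\<theta> = 0\<close>.\<close>

lemma one_minus_cos_mult_sum_step_char_power_le: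
  assumes "\<theta> \<in> space (torus_measure :: ('d::finite \<Rightarrow> real) measure)" "0 < sqnorm \<theta>"
  shows "\<bar>(1 - cos (phase \<theta> z)) * (\<Sum>k<n. step_char \<theta> ^ k)\<bar> \<le> 12 * real CARD('d) * lat_sqnorm z"
proof -
  have "\<bar>1 - cos (phase \<theta> z)\<bar> \<le> sqnorm \<theta> * lat_sqnorm z / 2"
    using one_minus_cos_le[of "phase \<theta> z"] phase_sq_le[of \<theta> z] by simp
  moreover have "0 \<le> sqnorm \<theta> * lat_sqnorm z"
    using order_trans[OF zero_le_power2 phase_sq_le] .
  ultimately have "\<bar>(1 - cos (phase \<theta> z)) * (\<Sum>k<n. step_char \<theta> ^ k)\<bar>
      \<le> (sqnorm \<theta> * lat_sqnorm z / 2) * (24 * real CARD('d) / sqnorm \<theta>)"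
    unfolding abs_mult by (intro mult_mono abs_sum_step_char_power_le[OF assms]) auto
  also have "\<dots> = 12 * real CARD('d) * lat_sqnorm z"
    using assms(2) by (simp add: field_simps)
  finally show ?thesis .
qed

lemma convergent_exp_visits_diff: "convergent (\<lambda>n. exp_visits n x x - exp_visits n x (y::int^'d))"
proof -
  let ?s = "\<lambda>n \<theta>. (1 - cos (phase \<theta> (y - x))) * (\<Sum>k<n. step_char \<theta> ^ k)"
  let ?f = "\<lambda>\<theta>. (1 - cos (phase \<theta> (y - x))) / (1 - step_char \<theta>)"
  have "(\<lambda>n. integral\<^sup>L (torus_measure :: ('d \<Rightarrow> real) measure) (?s n)) \<longlonglongrightarrow> integral\<^sup>L torus_measure ?f"
  proof (rule integral_dominated_convergence[where w = "\<lambda>_. 12 * real CARD('d) * lat_sqnorm (y - x)"])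
    show "AE \<theta> in torus_measure. norm (?s n \<theta>) \<le> 12 * real CARD('d) * lat_sqnorm (y - x)" for n
      using AE_space AE_torus_generic
      by eventually_elim (simp add: one_minus_cos_mult_sum_step_char_power_le generic_point_torus(1))
    show "AE \<theta> in torus_measure. (\<lambda>n. ?s n \<theta>) \<longlonglongrightarrow> ?f \<theta>"
      using AE_space AE_torus_generic
    proof eventually_elim
      case (elim \<theta>)
      have "(\<lambda>k. step_char \<theta> ^ k) sums (1 / (1 - step_char \<theta>))"
        by (intro geometric_sums) (simp add: generic_point_torus(2)[OF elim])
      then have "(\<lambda>n. ?s n \<theta>) \<longlonglongrightarrow> (1 - cos (phase \<theta> (y - x))) * (1 / (1 - step_char \<theta>))"
        unfolding sums_def by (rule tendsto_mult_left)
      then show ?case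
        by simp
    qed
  qed (simp_all add: finite_measure.integrable_const[OF finite_measure_torus])
  then have "(\<lambda>n. integral\<^sup>L (torus_measure :: ('d \<Rightarrow> real) measure) (?s (Suc n))) \<longlonglongrightarrow> integral\<^sup>L torus_measure ?f"
    by (rule LIMSEQ_Suc)
  then have "(\<lambda>n. (2 * pi) ^ CARD('d) * (exp_visits n x x - exp_visits n x y)) \<longlonglongrightarrow> integral\<^sup>L torus_measure ?f"
    unfolding exp_visits_diff_fourier .
  then have "(\<lambda>n. (2 * pi) ^ CARD('d) * (exp_visits n x x - exp_visits n x y) / (2 * pi) ^ CARD('d))
      \<longlonglongrightarrow> integral\<^sup>L torus_measure ?f / (2 * pi) ^ CARD('d)"
    by (intro tendsto_divide tendsto_const) auto
  then show ?thesis
    unfolding convergent_def by auto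
qed

section \<open>The discrete potential\<close>

lemma exp_visits_diag: "exp_visits n (x::int^'d) x = exp_visits n (z::int^'d) z"
proof -
  have "(2 * pi) ^ CARD('d) * srw_p k x x = (2 * pi) ^ CARD('d) * srw_p k z z" for k
    using srw_p_fourier[of k x x] srw_p_fourier[of k z z] by simp
  then show ?thesis
    unfolding exp_visits_def by simp
qed

lemma exp_visits_Suc:
  "exp_visits (Suc n) x y = ddelta y x + (\<Sum>z\<in>lat_nbrs x. exp_visits n z y) / (2 * real CARD('d))"
  for x :: "int^'d"
proof -
  have "exp_visits (Suc n) x y = srw_p 0 x y + (\<Sum>k\<le>n. srw_p (Suc k) x y)"
    unfolding exp_visits_def by (simp only: sum.atMost_Suc_shift)
  also have "(\<Sum>k\<le>n. srw_p (Suc k) x y) = (\<Sum>z\<in>lat_nbrs x. exp_visits n z y) / (2 * real CARD('d))"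
    unfolding exp_visits_def by (simp add: sum_divide_distrib[symmetric] sum.swap[of _ "lat_nbrs x"])
  finally show ?thesis
    by (simp add: ddelta_def eq_commute)
qed

lemma pot_kernel_mean:
  "(\<Sum>z\<in>lat_nbrs x. pot_kernel z y) / (2 * real CARD('d)) - pot_kernel x y = ddelta y (x::int^'d)"
proof -
  define a where "a n w = exp_visits n w w - exp_visits n w y" for n w
  have a_lim: "(\<lambda>n. a n w) \<longlonglongrightarrow> pot_kernel w y" for w
    unfolding a_def pot_kernel_def using convergent_exp_visits_diff convergent_LIMSEQ_iff by blast
  have "(\<Sum>z\<in>lat_nbrs x. a n z) / (2 * real CARD('d)) - a n x = ddelta y x - srw_p (Suc n) x y" for n
  proof -
    have "(\<Sum>z\<in>lat_nbrs x. a n z) = (\<Sum>z\<in>lat_nbrs x. exp_visits n x x - exp_visits n z y)"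
      unfolding a_def by (intro sum.cong refl arg_cong2[where f = minus] exp_visits_diag)
    then have "(\<Sum>z\<in>lat_nbrs x. a n z) = 2 * real CARD('d) * exp_visits n x x - (\<Sum>z\<in>lat_nbrs x. exp_visits n z y)"
      by (simp add: sum_subtractf card_lat_nbrs)
    then show ?thesis
      using exp_visits_Suc[of n x y] unfolding a_def by (simp add: exp_visits_def diff_divide_distrib)
  qed
  moreover have "(\<lambda>n. ddelta y x - srw_p (Suc n) x y) \<longlonglongrightarrow> ddelta y x - 0"
    by (intro tendsto_intros LIMSEQ_Suc[OF srw_p_tendsto_0])
  moreover have "(\<lambda>n. (\<Sum>z\<in>lat_nbrs x. a n z) / (2 * real CARD('d)) - a n x)
      \<longlonglongrightarrow> (\<Sum>z\<in>lat_nbrs x. pot_kernel z y) / (2 * real CARD('d)) - pot_kernel x y"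
    by (intro tendsto_intros a_lim) simp
  ultimately show ?thesis
    using LIMSEQ_unique by fastforce
qed

lemma green_fn_mean:
  assumes "3 \<le> CARD('d)"
  shows "(\<Sum>z\<in>lat_nbrs x. green_fn z y) / (2 * real CARD('d)) - green_fn x y = - ddelta y (x::int^'d)"
proof -
  have summable: "summable (\<lambda>k. srw_p k z y)" for z
    by (rule summable_srw_p[OF assms])
  have "green_fn x y = srw_p 0 x y + (\<Sum>k. srw_p (Suc k) x y)"
    unfolding green_fn_def using suminf_split_head[OF summable[of x]] by simp
  also have "(\<Sum>k. srw_p (Suc k) x y) = (\<Sum>k. \<Sum>z\<in>lat_nbrs x. srw_p k z y) / (2 * real CARD('d))"
    by (simp add: suminf_divide summable_sum summable)
  also have "(\<Sum>k. \<Sum>z\<in>lat_nbrs x. srw_p k z y) = (\<Sum>z\<in>lat_nbrs x. green_fn z y)"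
    unfolding green_fn_def by (rule suminf_sum) (rule summable)
  finally show ?thesis
    by (simp add: ddelta_def eq_commute)
qed

lemma disc_lap_pot_kernel: "disc_lap \<xi> (\<lambda>x. pot_kernel x y) x = ddelta y (x::int^'d) / \<xi>\<^sup>2"
  unfolding disc_lap_eq_mean pot_kernel_mean ..

lemma disc_lap_green_fn:
  assumes "3 \<le> CARD('d)"
  shows "disc_lap \<xi> (\<lambda>x. green_fn x y) x = - ddelta y (x::int^'d) / \<xi>\<^sup>2"
  unfolding disc_lap_eq_mean green_fn_mean[OF assms] by simp

lemma disc_lap_g_xi:
  assumes "0 < \<xi>" "2 \<le> CARD('d)"
  shows "disc_lap \<xi> (\<lambda>x. g_xi \<xi> x y) x = - ddelta y (x::int^'d) / \<xi> ^ CARD('d)"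
proof (cases "CARD('d) = 2")
  case True
  then have "disc_lap \<xi> (\<lambda>x. g_xi \<xi> x y) x = - disc_lap \<xi> (\<lambda>x. pot_kernel x y) x"
    unfolding g_xi_def by (simp add: disc_lap_diff disc_lap_const)
  then show ?thesis
    using True by (simp add: disc_lap_pot_kernel)
next
  case False
  then have "3 \<le> CARD('d)"
    using assms(2) by simp
  have "\<xi> powr (2 - real CARD('d)) = \<xi>\<^sup>2 / \<xi> ^ CARD('d)"
    using assms(1) by (simp add: powr_diff powr_realpow)
  moreover have "disc_lap \<xi> (\<lambda>x. g_xi \<xi> x y) x = \<xi> powr (2 - real CARD('d)) * disc_lap \<xi> (\<lambda>x. green_fn x y) x"
    unfolding g_xi_def using False by (simp add: disc_lap_cmult)
  ultimately show ?thesis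
    using assms(1) by (simp add: disc_lap_green_fn[OF \<open>3 \<le> CARD('d)\<close>])
qed

theorem disc_lap_disc_potential:
  assumes "0 < \<xi>" "2 \<le> CARD('d)" "finite {y. \<mu> y \<noteq> 0}"
  shows "disc_lap \<xi> (disc_potential \<xi> \<mu>) x = - \<mu> (x::int^'d)"
proof -
  have "disc_lap \<xi> (disc_potential \<xi> \<mu>) x
      = \<xi> ^ CARD('d) * (\<Sum>y | \<mu> y \<noteq> 0. \<mu> y * disc_lap \<xi> (\<lambda>x. g_xi \<xi> x y) x)"
    unfolding disc_potential_def[abs_def] by (simp add: disc_lap_cmult disc_lap_sum mult.commute)
  also have "\<dots> = - (\<Sum>y | \<mu> y \<noteq> 0. \<mu> y * ddelta y x)"
    using assms(1) by (simp add: disc_lap_g_xi[OF assms(1,2)] sum_distrib_left sum_negf)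
  also have "\<dots> = - \<mu> x"
    using assms(3) by (cases "\<mu> x = 0") (simp_all add: ddelta_def if_distrib eq_commute[of _ x] cong: if_cong)
  finally show ?thesis .
qed

section \<open>Toppling\<close>

lemma pos_part_nonneg: "0 \<le> pos_part t"
  unfolding pos_part_def by simp

lemma topple_seq_Suc:
  "topple_seq \<xi> xs \<sigma> (Suc k) y = topple_seq \<xi> xs \<sigma> k y +
     pos_part (topple_seq \<xi> xs \<sigma> k (xs (Suc k))) * (\<xi>\<^sup>2 * disc_lap \<xi> (ddelta (xs (Suc k))) y)"
  by (simp add: topple_def mult.assoc)

declare topple_seq.simps(2) [simp del]

lemma topple_seq_at_toppled_site:
  assumes "\<xi> \<noteq> 0"
  shows "topple_seq \<xi> xs \<sigma> (Suc k) (xs (Suc k)) = min (topple_seq \<xi> xs \<sigma> k (xs (Suc k))) 0"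
  unfolding topple_seq_Suc disc_lap_ddelta[OF assms]
  by (simp add: not_mem_lat_nbrs_self pos_part_def)

lemma topple_seq_mono_off_toppled_site:
  assumes "\<xi> \<noteq> 0" "y \<noteq> xs (Suc k)"
  shows "topple_seq \<xi> xs \<sigma> k y \<le> topple_seq \<xi> xs \<sigma> (Suc k) y"
  unfolding topple_seq_Suc disc_lap_ddelta[OF assms(1)] using assms(2)
  by (simp add: pos_part_nonneg)

lemma topple_seq_lower_bound:
  assumes "\<xi> \<noteq> 0" "c \<le> 0" "\<forall>y. c \<le> \<sigma> y"
  shows "c \<le> topple_seq \<xi> xs \<sigma> k y"
proof (induction k arbitrary: y)
  case 0
  then show ?case
    using assms(3) by simp
next
  case (Suc k)
  show ?case
  proof (cases "y = xs (Suc k)")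
    case True
    then show ?thesis
      using topple_seq_at_toppled_site[OF assms(1), of xs \<sigma> k] assms(2) Suc.IH by simp
  next
    case False
    then show ?thesis
      using topple_seq_mono_off_toppled_site[OF assms(1)] Suc.IH by (blast intro: order_trans)
  qed
qed

lemma topple_seq_nonneg_persists:
  assumes "\<xi> \<noteq> 0" "0 \<le> topple_seq \<xi> xs \<sigma> k x"
  shows "0 \<le> topple_seq \<xi> xs \<sigma> (Suc k) x"
proof (cases "x = xs (Suc k)")
  case True
  then show ?thesis
    using topple_seq_at_toppled_site[OF assms(1), of xs \<sigma> k] assms(2) by simp
next
  case False
  then show ?thesis
    using topple_seq_mono_off_toppled_site[OF assms(1)] assms(2) by (blast intro: order_trans)
qed

lemma odometer_0 [simp]: "odometer \<xi> xs \<sigma> 0 x = 0"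
  unfolding odometer_def by simp

lemma odometer_Suc:
  "odometer \<xi> xs \<sigma> (Suc k) x = odometer \<xi> xs \<sigma> k x +
     \<xi>\<^sup>2 * pos_part (topple_seq \<xi> xs \<sigma> k (xs (Suc k))) * ddelta (xs (Suc k)) x"
proof -
  let ?J = "\<lambda>k. {j. 1 \<le> j \<and> j \<le> k \<and> xs j = x}"
  have "?J (Suc k) = (if xs (Suc k) = x then insert (Suc k) (?J k) else ?J k)"
    by (auto simp: le_Suc_eq)
  moreover have "finite (?J k)"
    by (rule finite_subset[of _ "{..k}"]) auto
  ultimately show ?thesis
    unfolding odometer_def ddelta_def by (simp add: algebra_simps)
qed

lemma odometer_nonneg: "0 \<le> odometer \<xi> xs \<sigma> k x"
  unfolding odometer_def by (intro mult_nonneg_nonneg sum_nonneg pos_part_nonneg) auto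

lemma incseq_odometer: "incseq (\<lambda>k. odometer \<xi> xs \<sigma> k x)"
  by (rule incseq_SucI) (simp add: odometer_Suc ddelta_def pos_part_nonneg)

lemma odometer_eq_0_outside:
  assumes "\<forall>k\<ge>1. xs k \<in> B" "x \<notin> B"
  shows "odometer \<xi> xs \<sigma> k x = 0"
proof -
  have no_visits: "{j. 1 \<le> j \<and> j \<le> k \<and> xs j = x} = {}"
    using assms by auto
  show ?thesis
    unfolding odometer_def no_visits by simp
qed

lemma topple_seq_eq_disc_lap_odometer:
  "topple_seq \<xi> xs \<sigma> k y = \<sigma> y + disc_lap \<xi> (odometer \<xi> xs \<sigma> k) y"
proof (induction k arbitrary: y)
  case 0
  then show ?case
    by (simp add: disc_lap_const)
next
  case (Suc k)
  let ?c = "\<xi>\<^sup>2 * pos_part (topple_seq \<xi> xs \<sigma> k (xs (Suc k)))"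
  have "odometer \<xi> xs \<sigma> (Suc k) = (\<lambda>x. odometer \<xi> xs \<sigma> k x + ?c * ddelta (xs (Suc k)) x)"
    by (rule ext) (rule odometer_Suc)
  then have "disc_lap \<xi> (odometer \<xi> xs \<sigma> (Suc k)) y
      = disc_lap \<xi> (odometer \<xi> xs \<sigma> k) y + ?c * disc_lap \<xi> (ddelta (xs (Suc k))) y"
    by (simp only: disc_lap_add disc_lap_cmult)
  then show ?case
    using Suc.IH unfolding topple_seq_Suc by (simp add: algebra_simps)
qed

lemma odometer_pos_imp_topple_seq_nonneg:
  assumes "\<xi> \<noteq> 0" "0 < odometer \<xi> xs \<sigma> k x"
  shows "0 \<le> topple_seq \<xi> xs \<sigma> k x"
  using assms(2)
proof (induction k)
  case (Suc k)
  show ?case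
  proof (cases "0 < odometer \<xi> xs \<sigma> k x")
    case True
    then show ?thesis
      using Suc.IH topple_seq_nonneg_persists[OF assms(1)] by blast
  next
    case False
    then have "x = xs (Suc k)" "0 < topple_seq \<xi> xs \<sigma> k x"
      using Suc.prems odometer_nonneg[of \<xi> xs \<sigma> k x]
      by (auto simp: odometer_Suc ddelta_def pos_part_def split: if_splits)
    then show ?thesis
      using topple_seq_at_toppled_site[OF assms(1), of xs \<sigma> k] by simp
  qed
qed simp

text \<open>Summation by parts against a weight \<open>g\<close>: with \<open>g = 1\<close> this is conservation of mass,
  with \<open>g = lat_sqnorm\<close> it says that each toppling raises the second moment by the toppled mass.\<close>

lemma sum_mult_topple_seq:
  assumes "\<xi> \<noteq> 0" "finite N" "\<forall>k\<ge>1. insert (xs k) (lat_nbrs (xs k)) \<subseteq> N"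
  shows "(\<Sum>y\<in>N. g y * topple_seq \<xi> xs \<sigma> k y) = (\<Sum>y\<in>N. g y * \<sigma> y) +
     (\<Sum>j<k. pos_part (topple_seq \<xi> xs \<sigma> j (xs (Suc j))) * (\<xi>\<^sup>2 * disc_lap \<xi> g (xs (Suc j))))"
proof (induction k)
  case (Suc k)
  let ?p = "pos_part (topple_seq \<xi> xs \<sigma> k (xs (Suc k)))"
  have "(\<Sum>y\<in>N. g y * topple_seq \<xi> xs \<sigma> (Suc k) y)
      = (\<Sum>y\<in>N. g y * topple_seq \<xi> xs \<sigma> k y) + ?p * (\<Sum>y\<in>N. g y * (\<xi>\<^sup>2 * disc_lap \<xi> (ddelta (xs (Suc k))) y))"
    unfolding topple_seq_Suc by (simp add: distrib_left sum.distrib sum_distrib_left mult_ac)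
  also have "(\<Sum>y\<in>N. g y * (\<xi>\<^sup>2 * disc_lap \<xi> (ddelta (xs (Suc k))) y)) = \<xi>\<^sup>2 * disc_lap \<xi> g (xs (Suc k))"
    using assms by (intro sum_mult_disc_lap_ddelta) auto
  finally show ?case
    using Suc.IH by simp
qed simp

definition toppled_mass :: "real \<Rightarrow> (nat \<Rightarrow> int^'d) \<Rightarrow> (int^'d \<Rightarrow> real) \<Rightarrow> nat \<Rightarrow> real" where
  "toppled_mass \<xi> xs \<sigma> k = (\<Sum>j<k. pos_part (topple_seq \<xi> xs \<sigma> j (xs (Suc j))))"

lemma odometer_le_toppled_mass: "odometer \<xi> xs \<sigma> k x \<le> \<xi>\<^sup>2 * toppled_mass \<xi> xs \<sigma> k"
proof (induction k)
  case (Suc k)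
  have "odometer \<xi> xs \<sigma> (Suc k) x \<le> odometer \<xi> xs \<sigma> k x + \<xi>\<^sup>2 * pos_part (topple_seq \<xi> xs \<sigma> k (xs (Suc k)))"
    by (simp add: odometer_Suc ddelta_def pos_part_nonneg)
  then show ?case
    using Suc.IH by (simp add: toppled_mass_def distrib_left)
qed (simp add: toppled_mass_def)

lemma toppled_mass_bounded:
  assumes "\<xi> \<noteq> 0" "finite B" "\<forall>k\<ge>1. xs k \<in> B" "c \<le> 0" "\<forall>y. c \<le> \<sigma> y"
  shows "\<exists>K. \<forall>k. toppled_mass \<xi> xs \<sigma> k \<le> K"
proof -
  define N where "N = B \<union> (\<Union>b\<in>B. lat_nbrs b)"
  have N: "finite N" "\<forall>k\<ge>1. insert (xs k) (lat_nbrs (xs k)) \<subseteq> N"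
    unfolding N_def using assms(2,3) by auto
  define P where "P = (\<Sum>y\<in>N. lat_sqnorm y)"
  have "toppled_mass \<xi> xs \<sigma> k \<le> P * ((\<Sum>y\<in>N. \<sigma> y) - c * card N) - (\<Sum>y\<in>N. lat_sqnorm y * \<sigma> y)" for k
  proof -
    let ?\<sigma>k = "topple_seq \<xi> xs \<sigma> k"
    have "lat_sqnorm y * ?\<sigma>k y \<le> P * (?\<sigma>k y - c)" if "y \<in> N" for y
    proof -
      have "lat_sqnorm y \<le> P"
        unfolding P_def using N(1) that by (intro member_le_sum) (auto simp: lat_sqnorm_nonneg)
      moreover have "0 \<le> ?\<sigma>k y - c"
        using topple_seq_lower_bound[OF assms(1,4,5)] by simp
      ultimately have "lat_sqnorm y * (?\<sigma>k y - c) \<le> P * (?\<sigma>k y - c)"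
        by (rule mult_right_mono)
      moreover have "0 \<le> lat_sqnorm y * (- c)"
        using assms(4) lat_sqnorm_nonneg[of y] by (simp add: mult_nonneg_nonpos)
      ultimately show ?thesis
        by (simp add: right_diff_distrib)
    qed
    then have "(\<Sum>y\<in>N. lat_sqnorm y * ?\<sigma>k y) \<le> (\<Sum>y\<in>N. P * (?\<sigma>k y - c))"
      by (rule sum_mono)
    also have "\<dots> = P * ((\<Sum>y\<in>N. ?\<sigma>k y) - c * card N)"
      by (simp add: sum_subtractf sum_distrib_left[symmetric])
    finally have "(\<Sum>y\<in>N. lat_sqnorm y * ?\<sigma>k y) \<le> P * ((\<Sum>y\<in>N. ?\<sigma>k y) - c * card N)" .
    moreover have "(\<Sum>y\<in>N. ?\<sigma>k y) = (\<Sum>y\<in>N. \<sigma> y)"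
      using sum_mult_topple_seq[OF assms(1) N, of "\<lambda>_. 1"] by (simp add: disc_lap_const)
    moreover have "(\<Sum>y\<in>N. lat_sqnorm y * ?\<sigma>k y) = (\<Sum>y\<in>N. lat_sqnorm y * \<sigma> y) + toppled_mass \<xi> xs \<sigma> k"
      using sum_mult_topple_seq[OF assms(1) N, of lat_sqnorm] by (simp add: disc_lap_lat_sqnorm[OF assms(1)] toppled_mass_def)
    ultimately show ?thesis
      by simp
  qed
  then show ?thesis
    by blast
qed

lemma convergent_odometer:
  assumes "\<xi> \<noteq> 0" "finite B" "\<forall>k\<ge>1. xs k \<in> B" "c \<le> 0" "\<forall>y. c \<le> \<sigma> y"
  shows "convergent (\<lambda>k. odometer \<xi> xs \<sigma> k x)"
proof -
  obtain K where "\<forall>k. toppled_mass \<xi> xs \<sigma> k \<le> K"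
    using toppled_mass_bounded[OF assms] by blast
  then have "norm (odometer \<xi> xs \<sigma> k x) \<le> \<xi>\<^sup>2 * K" for k
    using odometer_le_toppled_mass[of \<xi> xs \<sigma> k x] odometer_nonneg[of \<xi> xs \<sigma> k x]
      mult_left_mono[of "toppled_mass \<xi> xs \<sigma> k" K "\<xi>\<^sup>2"]
    by simp
  then have "Bseq (\<lambda>k. odometer \<xi> xs \<sigma> k x)"
    by (rule BseqI')
  then show ?thesis
    using incseq_odometer[of \<xi> xs \<sigma> x] unfolding incseq_def by (rule Bseq_mono_convergent)
qed

lemma topple_seq_limit_nonpos:
  assumes "\<xi> \<noteq> 0" "infinite {k. 1 \<le> k \<and> xs k = x}" "(\<lambda>k. topple_seq \<xi> xs \<sigma> k x) \<longlonglongrightarrow> L"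
  shows "L \<le> 0"
proof (rule ccontr)
  assume "\<not> L \<le> 0"
  then obtain N where N: "\<forall>k\<ge>N. 0 < topple_seq \<xi> xs \<sigma> k x"
    using order_tendstoD(1)[OF assms(3), of 0] by (auto simp: eventually_sequentially)
  obtain k where "Suc N \<le> k" "xs k = x"
    using assms(2) unfolding infinite_nat_iff_unbounded_le by auto
  then obtain m where "k = Suc m" "N \<le> m"
    by (cases k) auto
  then have "topple_seq \<xi> xs \<sigma> (Suc m) x \<le> 0"
    using topple_seq_at_toppled_site[OF assms(1), of xs \<sigma> m] \<open>xs k = x\<close> by simp
  moreover have "0 < topple_seq \<xi> xs \<sigma> (Suc m) x"
    using N \<open>N \<le> m\<close> by simp
  ultimately show False
    by simp
qed

lemma topple_seq_limit_nonneg: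
  assumes "\<xi> \<noteq> 0" "(\<lambda>k. odometer \<xi> xs \<sigma> k x) \<longlonglongrightarrow> u" "0 < u"
    "(\<lambda>k. topple_seq \<xi> xs \<sigma> k x) \<longlonglongrightarrow> L"
  shows "0 \<le> L"
proof -
  have "eventually (\<lambda>k. 0 < odometer \<xi> xs \<sigma> k x) sequentially"
    using order_tendstoD(1)[OF assms(2,3)] .
  then have "eventually (\<lambda>k. 0 \<le> topple_seq \<xi> xs \<sigma> k x) sequentially"
    by eventually_elim (rule odometer_pos_imp_topple_seq_nonneg[OF assms(1)])
  then show ?thesis
    by (rule tendsto_lowerbound[OF assms(4)]) simp
qed

section \<open>The least subharmonic minorant\<close>

lemma subharmonic_minorant_le:
  fixes u :: "int^'d \<Rightarrow> real"
  assumes "\<xi> \<noteq> 0" "finite (lat_ball \<xi> R :: (int^'d) set)"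
    and lap_U: "\<forall>z. disc_lap \<xi> (disc_potential \<xi> \<sigma>) z = - \<sigma> z"
    and u_nonneg: "\<forall>z. 0 \<le> u z" and u_outside: "\<forall>z. z \<notin> lat_ball \<xi> R \<longrightarrow> u z = 0"
    and \<nu>_zero: "\<forall>z. 0 < u z \<longrightarrow> \<sigma> z + disc_lap \<xi> u z = 0"
    and f_sub: "\<forall>z\<in>lat_ball \<xi> R. 0 \<le> disc_lap \<xi> f z" and f_le: "\<forall>z. f z \<le> disc_potential \<xi> \<sigma> z"
  shows "f x \<le> disc_potential \<xi> \<sigma> x - u x"
proof -
  define w where "w z = disc_potential \<xi> \<sigma> z - u z" for z
  have "(\<lambda>z. f z - w z) x \<le> 0"
  proof (rule disc_lap_max_principle[OF assms(1), where A = "{z. 0 < u z}"])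
    show "finite {z. 0 < u z}"
      using u_outside by (intro finite_subset[OF _ assms(2)]) force
    show "\<forall>y\<in>{z. 0 < u z}. 0 \<le> disc_lap \<xi> (\<lambda>z. f z - w z) y"
    proof
      fix y
      assume "y \<in> {z. 0 < u z}"
      then have "y \<in> lat_ball \<xi> R" "\<sigma> y + disc_lap \<xi> u y = 0"
        using u_outside \<nu>_zero by auto
      then show "0 \<le> disc_lap \<xi> (\<lambda>z. f z - w z) y"
        using f_sub lap_U unfolding w_def by (auto simp: disc_lap_diff)
    qed
    show "\<forall>y. y \<notin> {z. 0 < u z} \<longrightarrow> f y - w y \<le> 0"
    proof (intro allI impI)
      fix y
      assume "y \<notin> {z. 0 < u z}"
      then have "u y = 0"
        using u_nonneg by (simp add: eq_iff)
      then show "f y - w y \<le> 0"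
        using f_le unfolding w_def by simp
    qed
  qed
  then show ?thesis
    unfolding w_def by simp
qed

lemma majorant_v_eq_potential_minus:
  fixes u :: "int^'d \<Rightarrow> real"
  assumes "\<xi> \<noteq> 0" "finite (lat_ball \<xi> R :: (int^'d) set)"
    and lap_U: "\<forall>z. disc_lap \<xi> (disc_potential \<xi> \<sigma>) z = - \<sigma> z"
    and u_nonneg: "\<forall>z. 0 \<le> u z" and u_outside: "\<forall>z. z \<notin> lat_ball \<xi> R \<longrightarrow> u z = 0"
    and \<nu>_nonpos: "\<forall>z\<in>lat_ball \<xi> R. \<sigma> z + disc_lap \<xi> u z \<le> 0"
    and \<nu>_zero: "\<forall>z. 0 < u z \<longrightarrow> \<sigma> z + disc_lap \<xi> u z = 0"
  shows "majorant_v \<xi> R \<sigma> x = disc_potential \<xi> \<sigma> x - u x"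
proof -
  define w where "w z = disc_potential \<xi> \<sigma> z - u z" for z
  have lap_w: "disc_lap \<xi> w z = - (\<sigma> z + disc_lap \<xi> u z)" for z
    unfolding w_def disc_lap_diff lap_U[rule_format] by simp
  let ?S = "{f x | f. (\<forall>z\<in>lat_ball \<xi> R. 0 \<le> disc_lap \<xi> f z) \<and> (\<forall>z. f z \<le> disc_potential \<xi> \<sigma> z)}"
  have "\<forall>z\<in>lat_ball \<xi> R. 0 \<le> disc_lap \<xi> w z" "\<forall>z. w z \<le> disc_potential \<xi> \<sigma> z"
    using lap_w \<nu>_nonpos u_nonneg unfolding w_def by auto
  then have "w x \<in> ?S"
    by blast
  moreover have "f x \<le> w x"
    if "\<forall>z\<in>lat_ball \<xi> R. 0 \<le> disc_lap \<xi> f z" "\<forall>z. f z \<le> disc_potential \<xi> \<sigma> z" for f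
    unfolding w_def by (rule subharmonic_minorant_le[OF assms(1-5,7) that])
  ultimately have "Sup ?S = w x"
    by (intro cSup_eq_maximum) auto
  then show ?thesis
    unfolding majorant_v_def w_def .
qed

lemma toppling_limit:
  assumes "\<xi> \<noteq> 0" "finite B" "infinitely_covering B xs" "c \<le> 0" "\<forall>y. c \<le> \<sigma> y"
  defines "u \<equiv> \<lambda>x. lim (\<lambda>k. odometer \<xi> xs \<sigma> k x)"
  shows "(\<lambda>k. odometer \<xi> xs \<sigma> k x) \<longlonglongrightarrow> u x"
    and "(\<lambda>k. topple_seq \<xi> xs \<sigma> k x) \<longlonglongrightarrow> \<sigma> x + disc_lap \<xi> u x"
    and "0 \<le> u x"
    and "x \<notin> B \<Longrightarrow> u x = 0"
    and "x \<in> B \<Longrightarrow> \<sigma> x + disc_lap \<xi> u x \<le> 0"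
    and "0 < u x \<Longrightarrow> \<sigma> x + disc_lap \<xi> u x = 0"
proof -
  have visits: "\<forall>k\<ge>1. xs k \<in> B" "\<And>z. z \<in> B \<Longrightarrow> infinite {k. 1 \<le> k \<and> xs k = z}"
    using assms(3) unfolding infinitely_covering_def by auto
  have odometer_lim: "(\<lambda>k. odometer \<xi> xs \<sigma> k z) \<longlonglongrightarrow> u z" for z
    unfolding u_def using convergent_odometer[OF assms(1,2) visits(1) assms(4,5)] convergent_LIMSEQ_iff by blast
  then show "(\<lambda>k. odometer \<xi> xs \<sigma> k x) \<longlonglongrightarrow> u x" .
  have topple_lim: "(\<lambda>k. topple_seq \<xi> xs \<sigma> k z) \<longlonglongrightarrow> \<sigma> z + disc_lap \<xi> u z" for z
    unfolding topple_seq_eq_disc_lap_odometer by (intro tendsto_add tendsto_const disc_lap_tendsto odometer_lim)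
  then show "(\<lambda>k. topple_seq \<xi> xs \<sigma> k x) \<longlonglongrightarrow> \<sigma> x + disc_lap \<xi> u x" .
  show "0 \<le> u x"
    using odometer_lim by (rule LIMSEQ_le_const) (auto intro: odometer_nonneg)
  have u_outside: "u z = 0" if "z \<notin> B" for z
    using odometer_lim[of z] unfolding odometer_eq_0_outside[OF visits(1) that] by (simp add: LIMSEQ_const_iff)
  then show "x \<notin> B \<Longrightarrow> u x = 0" .
  have \<nu>_nonpos: "\<sigma> z + disc_lap \<xi> u z \<le> 0" if "z \<in> B" for z
    using topple_seq_limit_nonpos[OF assms(1) visits(2)[OF that] topple_lim] .
  then show "x \<in> B \<Longrightarrow> \<sigma> x + disc_lap \<xi> u x \<le> 0" .
  show "\<sigma> x + disc_lap \<xi> u x = 0" if "0 < u x"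
  proof (rule antisym)
    show "\<sigma> x + disc_lap \<xi> u x \<le> 0"
      using \<nu>_nonpos u_outside that by force
    show "0 \<le> \<sigma> x + disc_lap \<xi> u x"
      by (rule topple_seq_limit_nonneg[OF assms(1) odometer_lim that topple_lim])
  qed
qed

theorem proposition3p2:
  fixes \<xi> R :: real and \<sigma> :: "int^'d \<Rightarrow> real" and xs :: "nat \<Rightarrow> int^'d"
  assumes "CARD('d) \<ge> 2" and "\<xi> > 0" and "R > 0"
    and "bounded (range \<sigma>)" and "finite {z. \<sigma> z \<noteq> 0}"
    and "{z. \<sigma> z \<noteq> 0} \<subseteq> lat_ball \<xi> R"
    and "infinitely_covering (lat_ball \<xi> R) xs"
  shows "(\<forall>x. convergent (\<lambda>k. topple_seq \<xi> xs \<sigma> k x))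
       \<and> (\<forall>x. convergent (\<lambda>k. odometer \<xi> xs \<sigma> k x))
       \<and> (\<lambda>x. lim (\<lambda>k. topple_seq \<xi> xs \<sigma> k x))
            = (\<lambda>x. \<sigma> x + disc_lap \<xi> (\<lambda>y. lim (\<lambda>k. odometer \<xi> xs \<sigma> k y)) x)
       \<and> (\<lambda>x. lim (\<lambda>k. odometer \<xi> xs \<sigma> k x))
            = (\<lambda>x. disc_potential \<xi> \<sigma> x - majorant_v \<xi> R \<sigma> x)"
proof -
  have "\<xi> \<noteq> 0"
    using assms(2) by simp
  obtain a where a: "\<forall>y. \<bar>\<sigma> y\<bar> \<le> a"
    using assms(4) by (auto simp: bounded_iff)
  have lower: "- a \<le> 0" "\<forall>y. - a \<le> \<sigma> y"
    using a by (meson abs_ge_zero order_trans neg_le_0_iff_le, meson abs_le_D2 minus_le_iff)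
  note limit = toppling_limit[OF \<open>\<xi> \<noteq> 0\<close> finite_lat_ball[OF assms(2)] assms(7) lower]
  have "majorant_v \<xi> R \<sigma> x = disc_potential \<xi> \<sigma> x - lim (\<lambda>k. odometer \<xi> xs \<sigma> k x)" for x
    using limit disc_lap_disc_potential[OF assms(2,1,5)]
    by (intro majorant_v_eq_potential_minus[OF \<open>\<xi> \<noteq> 0\<close> finite_lat_ball[OF assms(2)]]) auto
  then show ?thesis
    using limit(1,2) by (auto simp: convergent_def limI)
qed

end
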